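(* Let $\mathcal{G}$ be the Lie group of $3\times 3$ pairwise comparisons matrices, $$\mathcal{G}=\left\{\begin{pmatrix} 1 & m_{12} & m_{13} \\ \frac{1}{m_{12}} & 1 & m_{23} \\ \frac{1}{m_{13}} & \frac{1}{m_{23}} & 1\end{pmatrix} : m_{12},m_{13},m_{23}\in\mathbb{R}^+\right\},$$ with the Hadamard (entrywise) product. Let $$H=\left\{\begin{pmatrix} 1 & k & \frac1k \\ \frac1k & 1 & k \\ k & \frac1k & 1\end{pmatrix} : k\in\mathbb{R}^+\right\},\qquad L=\left\{\begin{pmatrix} 1 & y & yz \\ \frac1y & 1 & z \\ \frac{1}{yz} & \frac1z & 1\end{pmatrix} : y,z\in\mathbb{R}^+\right\}.$$ Then: (i) $H$ and $L$ are normal subgroups of the Lie group $\mathcal{G}$; (ii) $\mathcal{G}$ is the internal direct product of the normal Lie subgroups $H$ and $L$; in particular $\mathcal{G}\simeq H\times L$.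
   Context: The Hadamard product is $M\cdot N=[m_{ij}n_{ij}]$, with identity the all-ones matrix $e$. A group $\mathcal{G}$ is the internal direct product of normal subgroups $N_1,\dots,N_n$ if $\mathcal{G}=N_1N_2\cdots N_n$ and $N_i\cap(N_1\cdots N_{i-1}N_{i+1}\cdots N_n)=\{e\}$ for every $i$. *)

theory Defs
  imports "HOL-Analysis.Analysis" "HOL-Algebra.Algebra"
begin

type_synonym mat3 = "real^3^3"

definition hadamard :: "mat3 \<Rightarrow> mat3 \<Rightarrow> mat3" where
  "hadamard M N = (\<chi> i j. M $ i $ j * N $ i $ j)"

definition ones3 :: mat3 where
  "ones3 = (\<chi> i j. 1)"

definition pcm3 :: "real \<Rightarrow> real \<Rightarrow> real \<Rightarrow> mat3" where
  "pcm3 a b c = vector [vector [1, a, b], vector [1/a, 1, c], vector [1/b, 1/c, 1]]"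

definition PC3 :: "mat3 monoid" where
  "PC3 = \<lparr> carrier = {pcm3 a b c | a b c. a > 0 \<and> b > 0 \<and> c > 0},
           mult = hadamard, one = ones3 \<rparr>"

definition H3 :: "mat3 set" where
  "H3 = {pcm3 k (1/k) k | k. k > 0}"

definition L3 :: "mat3 set" where
  "L3 = {pcm3 y (y*z) z | y z. y > 0 \<and> z > 0}"

text \<open>Internal direct product of two normal subgroups, as in the paper's definition with n = 2.\<close>
definition internal_direct_product2 :: "('a, 'b) monoid_scheme \<Rightarrow> 'a set \<Rightarrow> 'a set \<Rightarrow> bool" where
  "internal_direct_product2 G N1 N2 \<longleftrightarrow>
     N1 \<lhd> G \<and> N2 \<lhd> G \<and> carrier G = N1 <#>\<^bsub>G\<^esub> N2 \<and>
     N1 \<inter> N2 = {\<one>\<^bsub>G\<^esub>} \<and> N2 \<inter> N1 = {\<one>\<^bsub>G\<^esub>}"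

end

theory Submission
  imports Defs
begin

text \<open>In logarithmic coordinates \<open>(log m\<^sub>1\<^sub>2, log m\<^sub>1\<^sub>3, log m\<^sub>2\<^sub>3)\<close> the group of pairwise
  comparisons matrices is the vector space \<open>\<real>\<^sup>3\<close>; \<open>H\<close> becomes the line spanned by \<open>(1,-1,1)\<close> and \<open>L\<close>
  the plane \<open>b = a + c\<close>. The line is not contained in the plane, so \<open>\<real>\<^sup>3\<close> is their direct sum.
  Explicitly, \<open>pcm3 a b c\<close> splits with \<open>k\<^sup>3 = a c / b\<close>, \<open>y = a / k\<close>, \<open>z = c / k\<close>. Being abelian, the
  group has all its subgroups normal, and a decomposition into two normal subgroups with trivial
  intersection yields the isomorphism with the direct product.\<close>

lemma (in comm_group) internal_direct_product2I:
  assumes "subgroup A G" "subgroup B G" "A \<inter> B = {\<one>}" "A <#> B = carrier G"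
  shows "internal_direct_product2 G A B"
  using assms subgroup_imp_normal by (auto simp: internal_direct_product2_def)

lemma (in group) iso_DirProd_if_internal_direct_product2:
  assumes "internal_direct_product2 G A B"
  shows "G \<cong> subgroup_generated G A \<times>\<times> subgroup_generated G B"
proof -
  have "(\<lambda>(x, y). x \<otimes> y) \<in> iso (subgroup_generated G A \<times>\<times> subgroup_generated G B) G"
    using assms iso_group_mul_gen by (auto simp: internal_direct_product2_def)
  then have "subgroup_generated G A \<times>\<times> subgroup_generated G B \<cong> G"
    by (rule is_isoI)
  then show ?thesis
    by (rule group.iso_sym[rotated]) (simp add: DirProd_group group_subgroup_generated)
qed

lemma pcm3_entries:
  "pcm3 a b c $ 1 $ 2 = a" "pcm3 a b c $ 1 $ 3 = b" "pcm3 a b c $ 2 $ 3 = c"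
  by (simp_all add: pcm3_def vector_def)

lemma pcm3_eq_iff [simp]: "pcm3 a b c = pcm3 a' b' c' \<longleftrightarrow> a = a' \<and> b = b' \<and> c = c'"
  by (metis pcm3_entries)

lemma hadamard_pcm3: "hadamard (pcm3 a b c) (pcm3 a' b' c') = pcm3 (a * a') (b * b') (c * c')"
  by (simp add: vec_eq_iff forall_3 hadamard_def pcm3_def vector_def)

lemma ones3_eq_pcm3: "ones3 = pcm3 1 1 1"
  by (simp add: vec_eq_iff forall_3 ones3_def pcm3_def vector_def)

lemma carrier_PC3: "carrier PC3 = {pcm3 a b c | a b c. a > 0 \<and> b > 0 \<and> c > 0}"
  by (simp add: PC3_def)

lemma mult_PC3: "x \<otimes>\<^bsub>PC3\<^esub> y = hadamard x y"
  by (simp add: PC3_def)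

lemma one_PC3: "\<one>\<^bsub>PC3\<^esub> = pcm3 1 1 1"
  by (simp add: PC3_def ones3_eq_pcm3)

lemma comm_group_PC3: "comm_group PC3"
proof (rule comm_groupI)
  fix x y z assume "x \<in> carrier PC3" "y \<in> carrier PC3" "z \<in> carrier PC3"
  then show "x \<otimes>\<^bsub>PC3\<^esub> y \<otimes>\<^bsub>PC3\<^esub> z = x \<otimes>\<^bsub>PC3\<^esub> (y \<otimes>\<^bsub>PC3\<^esub> z)"
    by (auto simp: carrier_PC3 mult_PC3 hadamard_pcm3 mult.assoc)
next
  fix x y assume "x \<in> carrier PC3" "y \<in> carrier PC3"
  then show "x \<otimes>\<^bsub>PC3\<^esub> y = y \<otimes>\<^bsub>PC3\<^esub> x"
    by (auto simp: carrier_PC3 mult_PC3 hadamard_pcm3 mult.commute)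
next
  fix x assume "x \<in> carrier PC3"
  then obtain a b c where x: "x = pcm3 a b c" "a > 0" "b > 0" "c > 0"
    by (auto simp: carrier_PC3)
  show "\<exists>y\<in>carrier PC3. y \<otimes>\<^bsub>PC3\<^esub> x = \<one>\<^bsub>PC3\<^esub>"
  proof
    show "pcm3 (1/a) (1/b) (1/c) \<otimes>\<^bsub>PC3\<^esub> x = \<one>\<^bsub>PC3\<^esub>"
      using x by (simp add: mult_PC3 one_PC3 hadamard_pcm3)
    show "pcm3 (1/a) (1/b) (1/c) \<in> carrier PC3"
      using x by (auto simp: carrier_PC3)
  qed
qed (auto simp: carrier_PC3 mult_PC3 one_PC3 hadamard_pcm3)

interpretation PC: comm_group PC3
  by (rule comm_group_PC3)

lemma inv_PC3:
  assumes "a > 0" "b > 0" "c > 0"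
  shows "inv\<^bsub>PC3\<^esub> (pcm3 a b c) = pcm3 (1/a) (1/b) (1/c)"
  by (rule PC.inv_equality) (use assms in \<open>auto simp: carrier_PC3 mult_PC3 one_PC3 hadamard_pcm3\<close>)

lemma subgroup_H3: "subgroup H3 PC3"
proof (rule PC.subgroupI)
  show "H3 \<subseteq> carrier PC3"
    by (auto simp: H3_def carrier_PC3)
  have "pcm3 1 (1/1) 1 \<in> H3"
    unfolding H3_def by force
  then show "H3 \<noteq> {}"
    by blast
next
  fix x assume "x \<in> H3"
  then obtain k where "x = pcm3 k (1/k) k" "k > 0"
    by (auto simp: H3_def)
  then show "inv\<^bsub>PC3\<^esub> x \<in> H3"
    by (auto simp: H3_def inv_PC3 intro!: exI[of _ "1/k"])
next
  fix x x' assume "x \<in> H3" "x' \<in> H3"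
  then obtain k k' where "x = pcm3 k (1/k) k" "k > 0" "x' = pcm3 k' (1/k') k'" "k' > 0"
    by (auto simp: H3_def)
  then show "x \<otimes>\<^bsub>PC3\<^esub> x' \<in> H3"
    by (auto simp: H3_def mult_PC3 hadamard_pcm3 intro!: exI[of _ "k * k'"])
qed

lemma subgroup_L3: "subgroup L3 PC3"
proof (rule PC.subgroupI)
  show "L3 \<subseteq> carrier PC3"
    by (auto simp: L3_def carrier_PC3)
  have "pcm3 1 (1 * 1) 1 \<in> L3"
    unfolding L3_def by force
  then show "L3 \<noteq> {}"
    by blast
next
  fix x assume "x \<in> L3"
  then obtain y z where "x = pcm3 y (y * z) z" "y > 0" "z > 0"
    by (auto simp: L3_def)
  then show "inv\<^bsub>PC3\<^esub> x \<in> L3"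
    by (auto simp: L3_def inv_PC3 intro!: exI[of _ "1/y"] exI[of _ "1/z"])
next
  fix x x' assume "x \<in> L3" "x' \<in> L3"
  then obtain y z y' z' where "x = pcm3 y (y * z) z" "y > 0" "z > 0"
      "x' = pcm3 y' (y' * z') z'" "y' > 0" "z' > 0"
    by (auto simp: L3_def)
  then show "x \<otimes>\<^bsub>PC3\<^esub> x' \<in> L3"
    by (auto simp: L3_def mult_PC3 hadamard_pcm3 intro!: exI[of _ "y * y'"] exI[of _ "z * z'"])
qed

lemma H3_Int_L3: "H3 \<inter> L3 = {\<one>\<^bsub>PC3\<^esub>}"
proof
  show "{\<one>\<^bsub>PC3\<^esub>} \<subseteq> H3 \<inter> L3"
    using subgroup_H3 subgroup_L3 subgroup.one_closed by blast
  show "H3 \<inter> L3 \<subseteq> {\<one>\<^bsub>PC3\<^esub>}"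
  proof
    fix x assume "x \<in> H3 \<inter> L3"
    then obtain k y z where x: "x = pcm3 k (1/k) k" "k > 0" "x = pcm3 y (y * z) z"
      by (auto simp: H3_def L3_def)
    then have "1/k = k * k"
      by (metis pcm3_eq_iff)
    then have "k ^ 3 = 1"
      using \<open>k > 0\<close> by (simp add: field_simps power3_eq_cube)
    then have "k = 1"
      using \<open>k > 0\<close> by (metis less_imp_le power_eq_iff_eq_base power_one zero_less_numeral zero_le_one)
    then show "x \<in> {\<one>\<^bsub>PC3\<^esub>}"
      using x by (simp add: one_PC3)
  qed
qed

lemma set_mult_H3_L3: "H3 <#>\<^bsub>PC3\<^esub> L3 = carrier PC3"
proof
  show "H3 <#>\<^bsub>PC3\<^esub> L3 \<subseteq> carrier PC3"
    using subgroup_H3 subgroup_L3 by (simp add: PC.set_mult_closed subgroup.subset)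
  show "carrier PC3 \<subseteq> H3 <#>\<^bsub>PC3\<^esub> L3"
  proof
    fix x assume "x \<in> carrier PC3"
    then obtain a b c where x: "x = pcm3 a b c" "a > 0" "b > 0" "c > 0"
      by (auto simp: carrier_PC3)
    define k where "k = root 3 (a * c / b)"
    have k: "k > 0" "k ^ 3 = a * c / b"
      using x by (auto simp: k_def)
    have "x = pcm3 k (1/k) k \<otimes>\<^bsub>PC3\<^esub> pcm3 (a/k) ((a/k) * (c/k)) (c/k)"
      using x k by (auto simp: mult_PC3 hadamard_pcm3 field_simps power3_eq_cube)
    moreover have "pcm3 k (1/k) k \<in> H3"
      using k by (auto simp: H3_def)
    moreover have "pcm3 (a/k) ((a/k) * (c/k)) (c/k) \<in> L3"
      using k x by (auto simp: L3_def)
    ultimately show "x \<in> H3 <#>\<^bsub>PC3\<^esub> L3"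
      by (auto simp: set_mult_def)
  qed
qed

theorem mainTheorem6:
  shows "H3 \<lhd> PC3 \<and> L3 \<lhd> PC3 \<and> internal_direct_product2 PC3 H3 L3 \<and>
         PC3 \<cong> DirProd (subgroup_generated PC3 H3) (subgroup_generated PC3 L3)"
proof -
  have direct_product: "internal_direct_product2 PC3 H3 L3"
    using subgroup_H3 subgroup_L3 H3_Int_L3 set_mult_H3_L3 by (rule PC.internal_direct_product2I)
  then have "H3 \<lhd> PC3" "L3 \<lhd> PC3"
    by (simp_all add: internal_direct_product2_def)
  then show ?thesis
    using direct_product PC.iso_DirProd_if_internal_direct_product2 by blast
qed

end
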